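(* Let $\mathcal{F}=\{f_i\}_{i=1}^N$ be a frame for $\mathbb{R}^n$ of length $N$ which has the exact PR-redundancy property and satisfies $d(\mathcal{F})<n$. Then $N<n(n+1)/2$.
   Context: A frame for $\mathbb{R}^n$ is a finite spanning sequence; $\mathcal{F}_\Lambda=\{f_i\}_{i\in\Lambda}$ for $\Lambda\subseteq\{1,\dots,N\}$. Let $\mathcal{S}_2$ be the set of real symmetric $n\times n$ matrices of rank at most $2$ and $\Theta_{L(\mathcal{F}_\Lambda)}(A)=(f_i^TAf_i)_{i\in\Lambda}$. $\mathcal{F}$ has the exact PR-redundancy property if $\ker(\Theta_{L(\mathcal{F}_\Lambda)})\cap\mathcal{S}_2\neq\ker(\Theta_{L(\mathcal{F})})\cap\mathcal{S}_2$ for every proper subset $\Lambda$. With $\Lambda^c$ the complement, $d_\Lambda=\max\{\dim\mathrm{span}(\mathcal{F}_\Lambda),\dim\mathrm{span}(\mathcal{F}_{\Lambda^c})\}$ and $d(\mathcal{F})=\min_{\Lambda\subseteq\{1,\dots,N\}}d_\Lambda$. *)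

theory Defs
  imports "HOL-Analysis.Analysis"
begin

definition is_frame :: "nat \<Rightarrow> (nat \<Rightarrow> real^'n) \<Rightarrow> bool" where
  "is_frame N f \<longleftrightarrow> span (f ` {1..N}) = UNIV"

definition S2 :: "(real^'n^'n) set" where
  "S2 = {A. transpose A = A \<and> rank A \<le> 2}"

text \<open>Kernel of Theta_{L(F_Lambda)}, A \<mapsto> (f_i^T A f_i)_{i in Lambda}, on symmetric matrices.\<close>
definition ker_Theta :: "(nat \<Rightarrow> real^'n) \<Rightarrow> nat set \<Rightarrow> (real^'n^'n) set" where
  "ker_Theta f \<Lambda> = {A. transpose A = A \<and> (\<forall>i\<in>\<Lambda>. f i \<bullet> (A *v f i) = 0)}"

definition exact_PR_redundancy :: "nat \<Rightarrow> (nat \<Rightarrow> real^'n) \<Rightarrow> bool" where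
  "exact_PR_redundancy N f \<longleftrightarrow>
     (\<forall>\<Lambda>. \<Lambda> \<subset> {1..N} \<longrightarrow> ker_Theta f \<Lambda> \<inter> S2 \<noteq> ker_Theta f {1..N} \<inter> S2)"

definition d_Lambda :: "nat \<Rightarrow> (nat \<Rightarrow> real^'n) \<Rightarrow> nat set \<Rightarrow> nat" where
  "d_Lambda N f \<Lambda> = max (dim (span (f ` \<Lambda>))) (dim (span (f ` ({1..N} - \<Lambda>))))"

definition d_frame :: "nat \<Rightarrow> (nat \<Rightarrow> real^'n) \<Rightarrow> nat" where
  "d_frame N f = Min {d_Lambda N f \<Lambda> | \<Lambda>. \<Lambda> \<subseteq> {1..N}}"

end

theory Submission
  imports Defs
begin

(* Exact PR-redundancy yields, for every i, a symmetric matrix A_i with f_i^T A_i f_i \<noteq> 0 and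
   f_j^T A_i f_j = 0 for j \<noteq> i. If d(F) < n, choose a splitting \<Lambda> with both halves spanning
   proper subspaces, and nonzero u \<perp> f_\<Lambda>, v \<perp> f_\<Lambda>^c: then B = u v^T + v u^T is a nonzero
   symmetric matrix with f_j^T B f_j = 2 (u \<bullet> f_j)(v \<bullet> f_j) = 0 for all j. The functionals
   M \<mapsto> f_j^T M f_j are biorthogonal to the A_i and annihilate B, so A_1, ..., A_N, B are
   linearly independent symmetric matrices, and N + 1 \<le> n(n+1)/2. *)

lemma biorthogonal_span_expansion:
  fixes A :: "'i \<Rightarrow> 'v::real_vector" and \<phi> :: "'i \<Rightarrow> 'v \<Rightarrow> real"
  assumes "finite I"
    and lin: "\<And>j. j \<in> I \<Longrightarrow> linear (\<phi> j)"
    and diag: "\<And>i. i \<in> I \<Longrightarrow> \<phi> i (A i) \<noteq> 0"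
    and offdiag: "\<And>i j. i \<in> I \<Longrightarrow> j \<in> I \<Longrightarrow> i \<noteq> j \<Longrightarrow> \<phi> j (A i) = 0"
    and x: "x \<in> span (A ` I)"
  shows "x = (\<Sum>i\<in>I. (\<phi> i x / \<phi> i (A i)) *\<^sub>R A i)"
  using x
proof (induction rule: span_induct_alt)
  case base
  show ?case using lin by (simp add: linear_0)
next
  case (step c x y)
  then obtain k where k: "k \<in> I" "x = A k" by blast
  have expansion_A: "(\<Sum>i\<in>I. (\<phi> i (A k) / \<phi> i (A i)) *\<^sub>R A i) = A k"
  proof -
    have "(\<Sum>i\<in>I. (\<phi> i (A k) / \<phi> i (A i)) *\<^sub>R A i)
        = (\<Sum>i\<in>I. if i = k then A k else 0)"
      using k(1) diag offdiag by (intro sum.cong) auto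
    then show ?thesis using \<open>finite I\<close> k(1) by simp
  qed
  have "(\<Sum>i\<in>I. (\<phi> i (c *\<^sub>R x + y) / \<phi> i (A i)) *\<^sub>R A i)
      = c *\<^sub>R (\<Sum>i\<in>I. (\<phi> i (A k) / \<phi> i (A i)) *\<^sub>R A i)
        + (\<Sum>i\<in>I. (\<phi> i y / \<phi> i (A i)) *\<^sub>R A i)"
    using lin k(2)
    by (simp add: linear_add linear_scale add_divide_distrib scaleR_add_left sum.distrib
        scaleR_sum_right times_divide_eq_right cong: sum.cong)
  with step expansion_A k(2) show ?case by simp
qed

lemma biorthogonal_card_less_dim:
  fixes A :: "'i \<Rightarrow> 'v::euclidean_space" and \<phi> :: "'i \<Rightarrow> 'v \<Rightarrow> real"
  assumes "finite I"
    and lin: "\<And>j. j \<in> I \<Longrightarrow> linear (\<phi> j)"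
    and diag: "\<And>i. i \<in> I \<Longrightarrow> \<phi> i (A i) \<noteq> 0"
    and offdiag: "\<And>i j. i \<in> I \<Longrightarrow> j \<in> I \<Longrightarrow> i \<noteq> j \<Longrightarrow> \<phi> j (A i) = 0"
    and "B \<noteq> 0" and B_kernel: "\<And>j. j \<in> I \<Longrightarrow> \<phi> j B = 0"
    and "A ` I \<subseteq> V" "B \<in> V"
  shows "card I < dim V"
proof -
  have B_span: "B \<notin> span (A ` I)"
  proof
    assume "B \<in> span (A ` I)"
    then have "B = (\<Sum>i\<in>I. (\<phi> i B / \<phi> i (A i)) *\<^sub>R A i)"
      by (rule biorthogonal_span_expansion[OF \<open>finite I\<close> lin diag offdiag, rotated -1])
    with B_kernel \<open>B \<noteq> 0\<close> show False by simp
  qed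
  have "independent (A ` I)"
    unfolding dependent_def
  proof clarify
    fix k assume k: "k \<in> I" and "A k \<in> span (A ` I - {A k})"
    moreover have "A ` I - {A k} \<subseteq> A ` (I - {k})"
      by auto
    ultimately have "A k \<in> span (A ` (I - {k}))"
      using span_mono by blast
    then have "A k = (\<Sum>i\<in>I - {k}. (\<phi> i (A k) / \<phi> i (A i)) *\<^sub>R A i)"
      by (rule biorthogonal_span_expansion[rotated -1])
        (use \<open>finite I\<close> lin diag offdiag in auto)
    also have "\<dots> = 0"
      using k offdiag by (intro sum.neutral) auto
    finally show False
      using diag[OF k] lin[OF k] by (simp add: linear_0)
  qed
  then have indep: "independent (insert B (A ` I))"
    using B_span by (rule independent_insertI[rotated])
  have "inj_on A I"
  proof (rule inj_onI, rule ccontr)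
    fix i j assume "i \<in> I" "j \<in> I" "A i = A j" "i \<noteq> j"
    then show False using diag[of j] offdiag[of i j] by simp
  qed
  moreover have "B \<notin> A ` I"
    using B_span by (auto intro: span_base)
  ultimately have "card (insert B (A ` I)) = Suc (card I)"
    using \<open>finite I\<close> by (simp add: card_image)
  moreover have "card (insert B (A ` I)) \<le> dim V"
    by (rule independent_card_le_dim) (use indep assms(7,8) in auto)
  ultimately show ?thesis
    by simp
qed

definition sym_unit :: "'n \<Rightarrow> 'n \<Rightarrow> real^'n^'n" where
  "sym_unit i j =
     (\<chi> k l. (if k = i \<and> l = j then 1 else 0) + (if k = j \<and> l = i then 1 else 0))"

lemma sym_unit_commute: "sym_unit i j = sym_unit j i"
  by (simp only: sym_unit_def add.commute)

lemma sum_sum_delta: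
  fixes g :: "'a::finite \<Rightarrow> 'b::finite \<Rightarrow> 'c::comm_monoid_add"
  shows "(\<Sum>i\<in>UNIV. \<Sum>j\<in>UNIV. if i = a \<and> j = b then g i j else 0) = g a b"
proof -
  have "(\<Sum>j\<in>UNIV. if i = a \<and> j = b then g i j else 0) = (if i = a then g i b else 0)" for i
    by (cases "i = a") simp_all
  then show ?thesis by simp
qed

lemma sum_sym_unit_nth:
  "(\<Sum>i\<in>UNIV. \<Sum>j\<in>UNIV. c i j *\<^sub>R sym_unit i j) $ k $ l = c k l + c l k"
proof -
  have "(\<Sum>i\<in>UNIV. \<Sum>j\<in>UNIV. c i j *\<^sub>R sym_unit i j) $ k $ l
      = (\<Sum>i\<in>UNIV. \<Sum>j\<in>UNIV. if i = k \<and> j = l then c i j else 0)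
      + (\<Sum>i\<in>UNIV. \<Sum>j\<in>UNIV. if i = l \<and> j = k then c i j else 0)"
    by (simp add: sym_unit_def distrib_left sum.distrib if_distrib[of "\<lambda>x. _ * x"]
        eq_commute conj_commute cong: if_cong)
  then show ?thesis
    by (simp only: sum_sum_delta)
qed

lemma symmetric_matrix_in_span_sym_unit:
  fixes A :: "real^'n^'n"
  assumes "transpose A = A"
  shows "A \<in> span (range (\<lambda>(i, j). sym_unit i j))"
proof -
  have "A$j$i = A$i$j" for i j
    using arg_cong[OF assms, of "\<lambda>M. M $ i $ j"] by (simp add: transpose_def)
  then have "(\<Sum>i\<in>UNIV. \<Sum>j\<in>UNIV. (A$i$j / 2) *\<^sub>R sym_unit i j) $ k $ l = A$k$l" for k l
    by (subst sum_sym_unit_nth) simp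
  then have "A = (\<Sum>i\<in>UNIV. \<Sum>j\<in>UNIV. (A$i$j / 2) *\<^sub>R sym_unit i j)"
    by (simp add: vec_eq_iff)
  also have "\<dots> \<in> span (range (\<lambda>(i, j). sym_unit i j))"
    by (intro span_sum span_scale span_base) auto
  finally show ?thesis .
qed

lemma dim_symmetric_matrices_le:
  "2 * dim {A :: real^'n^'n. transpose A = A} \<le> CARD('n) * (CARD('n) + 1)"
proof -
  let ?n = "CARD('n)"
  obtain h where h: "bij_betw h {1..?n} (UNIV :: 'n set)"
    using ex_bij_betw_nat_finite_1[of "UNIV :: 'n set"] by auto
  define P where "P = (SIGMA a:{1..?n}. {1..a})"
  define G where "G = (\<lambda>(a, b). sym_unit (h a) (h b)) ` P"
  have "range (\<lambda>(i, j). sym_unit i j) \<subseteq> G"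
  proof clarify
    fix i j :: 'n
    have "h ` {1..?n} = UNIV"
      using h by (simp add: bij_betw_def)
    then obtain a b where ab: "a \<in> {1..?n}" "b \<in> {1..?n}" "h a = i" "h b = j"
      by (metis UNIV_I imageE)
    show "sym_unit i j \<in> G"
    proof (cases "b \<le> a")
      case True
      then have "(a, b) \<in> P"
        using ab by (simp add: P_def)
      then show ?thesis
        unfolding G_def using ab by (auto intro: image_eqI[of _ _ "(a, b)"])
    next
      case False
      then have "(b, a) \<in> P"
        using ab by (simp add: P_def)
      moreover have "sym_unit i j = sym_unit (h b) (h a)"
        using ab by (simp add: sym_unit_commute)
      ultimately show ?thesis
        unfolding G_def by (auto intro: image_eqI[of _ _ "(b, a)"])
    qed
  qed
  then have "{A :: real^'n^'n. transpose A = A} \<subseteq> span G"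
    using symmetric_matrix_in_span_sym_unit span_mono by blast
  then have "dim {A :: real^'n^'n. transpose A = A} \<le> card G"
    by (rule dim_le_card) (simp add: G_def P_def)
  also have "card G \<le> card P"
    unfolding G_def by (rule card_image_le) (simp add: P_def)
  finally have "dim {A :: real^'n^'n. transpose A = A} \<le> card P" .
  moreover have "2 * card P = ?n * (?n + 1)"
    using double_gauss_sum_from_Suc_0[where 'a=nat, of ?n] by (simp add: P_def)
  ultimately show ?thesis
    by linarith
qed

lemma linear_quadratic_form: "linear (\<lambda>M :: real^'n^'n. x \<bullet> (M *v x))"
  by (rule linearI)
    (simp_all add: matrix_vector_mult_add_rdistrib inner_add_right
      flip: scaleR_matrix_vector_assoc)

definition sym_outer :: "real^'n \<Rightarrow> real^'n \<Rightarrow> real^'n^'n" where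
  "sym_outer u v = (\<chi> i j. u$i * v$j + v$i * u$j)"

lemma transpose_sym_outer: "transpose (sym_outer u v) = sym_outer u v"
  by (simp add: vec_eq_iff sym_outer_def transpose_def)

lemma sym_outer_mult: "sym_outer u v *v x = (v \<bullet> x) *\<^sub>R u + (u \<bullet> x) *\<^sub>R v"
  by (simp add: vec_eq_iff sym_outer_def matrix_vector_mult_def inner_vec_def
      sum_distrib_left sum_distrib_right sum.distrib algebra_simps)

lemma quadratic_form_sym_outer: "x \<bullet> (sym_outer u v *v x) = 2 * (u \<bullet> x) * (v \<bullet> x)"
  by (simp add: sym_outer_mult inner_add_right inner_commute)

lemma sym_outer_nonzero:
  assumes "u \<noteq> 0" "v \<noteq> 0"
  shows "sym_outer u v \<noteq> 0"
proof -
  have "u \<bullet> (sym_outer u v *v v) = (v \<bullet> v) * (u \<bullet> u) + (u \<bullet> v)\<^sup>2"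
    by (simp add: sym_outer_mult inner_add_right power2_eq_square inner_commute)
  also have "\<dots> > 0"
    using assms by (simp add: add_pos_nonneg)
  finally show ?thesis
    by auto
qed

lemma d_frame_attained:
  obtains L where "L \<subseteq> {1..N}" "d_frame N f = d_Lambda N f L"
proof -
  have "{d_Lambda N f L | L. L \<subseteq> {1..N}} = d_Lambda N f ` Pow {1..N}"
    by auto
  then have "d_frame N f \<in> d_Lambda N f ` Pow {1..N}"
    unfolding d_frame_def by (metis Min_in finite_Pow_iff finite_atLeastAtMost finite_imageI
        image_is_empty Pow_not_empty)
  then show ?thesis
    using that by auto
qed

lemma symmetric_matrix_vanishing_on_frame_exists:
  fixes f :: "nat \<Rightarrow> real^'n"
  assumes "d_frame N f < CARD('n)"
  obtains B :: "real^'n^'n"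
  where "transpose B = B" "B \<noteq> 0" "\<And>j. j \<in> {1..N} \<Longrightarrow> f j \<bullet> (B *v f j) = 0"
proof -
  obtain L where L: "L \<subseteq> {1..N}" "d_Lambda N f L < CARD('n)"
    using assms d_frame_attained by metis
  then have "dim (f ` L) < DIM(real^'n)" "dim (f ` ({1..N} - L)) < DIM(real^'n)"
    by (auto simp: d_Lambda_def)
  then obtain u v :: "real^'n" where
    u: "u \<noteq> 0" "\<And>y. y \<in> span (f ` L) \<Longrightarrow> orthogonal u y" and
    v: "v \<noteq> 0" "\<And>y. y \<in> span (f ` ({1..N} - L)) \<Longrightarrow> orthogonal v y"
    by (metis orthogonal_to_subspace_exists)
  have "(u \<bullet> f j) * (v \<bullet> f j) = 0" if "j \<in> {1..N}" for j
    using that u(2)[of "f j"] v(2)[of "f j"]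
    by (cases "j \<in> L") (auto simp: span_base orthogonal_def)
  then show ?thesis
    by (intro that[of "sym_outer u v"] transpose_sym_outer sym_outer_nonzero u(1) v(1))
      (simp add: quadratic_form_sym_outer)
qed

lemma exact_PR_redundancy_dual_matrix:
  fixes f :: "nat \<Rightarrow> real^'n"
  assumes "exact_PR_redundancy N f" "i \<in> {1..N}"
  obtains M :: "real^'n^'n" where "transpose M = M" "f i \<bullet> (M *v f i) \<noteq> 0"
    "\<And>j. j \<in> {1..N} \<Longrightarrow> j \<noteq> i \<Longrightarrow> f j \<bullet> (M *v f j) = 0"
proof -
  have "ker_Theta f ({1..N} - {i}) \<inter> S2 \<noteq> ker_Theta f {1..N} \<inter> S2"
    using assms unfolding exact_PR_redundancy_def by blast
  moreover have "ker_Theta f {1..N} \<subseteq> ker_Theta f ({1..N} - {i})"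
    unfolding ker_Theta_def by blast
  ultimately obtain M where "M \<in> ker_Theta f ({1..N} - {i})" "M \<notin> ker_Theta f {1..N}"
    by blast
  then show ?thesis
    using that[of M] unfolding ker_Theta_def by auto
qed

theorem proposition3p8:
  fixes f :: "nat \<Rightarrow> real^'n" and N :: nat
  assumes "is_frame N f"
    and "exact_PR_redundancy N f"
    and "d_frame N f < CARD('n)"
  shows "real N < real CARD('n) * (real CARD('n) + 1) / 2"
proof -
  obtain B where B: "transpose B = B" "B \<noteq> 0"
    "\<And>j. j \<in> {1..N} \<Longrightarrow> f j \<bullet> (B *v f j) = 0"
    using symmetric_matrix_vanishing_on_frame_exists[OF assms(3)] by blast
  have "\<forall>i\<in>{1..N}. \<exists>M. transpose M = M \<and> f i \<bullet> (M *v f i) \<noteq> 0 \<and>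
      (\<forall>j\<in>{1..N}. j \<noteq> i \<longrightarrow> f j \<bullet> (M *v f j) = 0)"
    by (metis exact_PR_redundancy_dual_matrix[OF assms(2)])
  then obtain A where A: "\<And>i. i \<in> {1..N} \<Longrightarrow>
      transpose (A i) = A i \<and> f i \<bullet> (A i *v f i) \<noteq> 0 \<and>
      (\<forall>j\<in>{1..N}. j \<noteq> i \<longrightarrow> f j \<bullet> (A i *v f j) = 0)"
    by metis
  have "card {1..N} < dim {M :: real^'n^'n. transpose M = M}"
    by (rule biorthogonal_card_less_dim[where \<phi>="\<lambda>j M. f j \<bullet> (M *v f j)" and A = A and B = B])
      (use linear_quadratic_form A B in auto)
  then have "2 * N < CARD('n) * (CARD('n) + 1)"
    using dim_symmetric_matrices_le[where 'n='n] by simp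
  then have "real (2 * N) < real (CARD('n) * (CARD('n) + 1))"
    by (simp only: of_nat_less_iff)
  then show ?thesis
    by (simp add: algebra_simps)
qed

end
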